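(* Let $(\mathsf P,\mathcal O)$ be a semitopology and $p\in\mathsf P$. If $p\in K(p)$ (i.e. $p$ is weakly regular), then $\overline{K(p)}=I(p)$. In particular this holds whenever $p$ is regular.
   Context: A semitopology is a pair $(\mathsf P,\mathcal O)$ where $\mathsf P$ is a set and $\mathcal O\subseteq\mathcal P(\mathsf P)$ contains $\varnothing$ and $\mathsf P$ and is closed under arbitrary unions. Points $p,p'$ are intertwined when every open set containing $p$ intersects every open set containing $p'$; $I(p)$ is the set of points intertwined with $p$; $K(p)=\mathrm{int}(I(p))$, where $\mathrm{int}(R)$ is the union of all open subsets of $R$. The closure $\overline R$ is the set of points $q$ such that every open set containing $q$intersects $R$. A set $T$ is topen when it is nonempty, open, and for all open $O,O'$, $O\cap T\neq\varnothing\neq T\cap O'$ implies $O\cap O'\neq\varnothing$; $p$ is regular when $p\in K(p)$ and $K(p)$ is topen. *)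

theory Defs
  imports Main
begin

definition semitopology :: "'a set \<Rightarrow> 'a set set \<Rightarrow> bool" where
  "semitopology P Op \<longleftrightarrow> Op \<subseteq> Pow P \<and> {} \<in> Op \<and> P \<in> Op \<and> (\<forall>X. X \<subseteq> Op \<longrightarrow> \<Union>X \<in> Op)"

definition intertwined :: "'a set set \<Rightarrow> 'a \<Rightarrow> 'a \<Rightarrow> bool" where
  "intertwined Op p p' \<longleftrightarrow> (\<forall>U\<in>Op. \<forall>U'\<in>Op. p \<in> U \<longrightarrow> p' \<in> U' \<longrightarrow> U \<inter> U' \<noteq> {})"

definition intertwined_set :: "'a set \<Rightarrow> 'a set set \<Rightarrow> 'a \<Rightarrow> 'a set" where
  "intertwined_set P Op p = {p' \<in> P. intertwined Op p p'}"

definition sinterior :: "'a set set \<Rightarrow> 'a set \<Rightarrow> 'a set" where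
  "sinterior Op R = \<Union>{U \<in> Op. U \<subseteq> R}"

definition community :: "'a set \<Rightarrow> 'a set set \<Rightarrow> 'a \<Rightarrow> 'a set" where
  "community P Op p = sinterior Op (intertwined_set P Op p)"

definition sclosure :: "'a set \<Rightarrow> 'a set set \<Rightarrow> 'a set \<Rightarrow> 'a set" where
  "sclosure P Op R = {q \<in> P. \<forall>U\<in>Op. q \<in> U \<longrightarrow> U \<inter> R \<noteq> {}}"

definition topen :: "'a set set \<Rightarrow> 'a set \<Rightarrow> bool" where
  "topen Op T \<longleftrightarrow> T \<noteq> {} \<and> T \<in> Op \<and>
     (\<forall>U\<in>Op. \<forall>U'\<in>Op. U \<inter> T \<noteq> {} \<longrightarrow> T \<inter> U' \<noteq> {} \<longrightarrow> U \<inter> U' \<noteq> {})"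

definition regular :: "'a set \<Rightarrow> 'a set set \<Rightarrow> 'a \<Rightarrow> bool" where
  "regular P Op p \<longleftrightarrow> p \<in> community P Op p \<and> topen Op (community P Op p)"

definition weakly_regular :: "'a set \<Rightarrow> 'a set set \<Rightarrow> 'a \<Rightarrow> bool" where
  "weakly_regular P Op p \<longleftrightarrow> p \<in> community P Op p"

end

theory Submission
  imports Defs
begin

text \<open>The set \<open>I(p)\<close> is closed, and \<open>K(p) \<subseteq> I(p)\<close>, so \<open>closure K(p) \<subseteq> I(p)\<close>.
  Conversely, if \<open>p \<in> K(p)\<close> then \<open>K(p)\<close> is an open neighbourhood of \<open>p\<close>, so every open
  neighbourhood of a point intertwined with \<open>p\<close> meets \<open>K(p)\<close>; hence \<open>I(p) \<subseteq> closure K(p)\<close>.\<close>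

lemma sinterior_open:
  assumes "semitopology P Op"
  shows "sinterior Op R \<in> Op"
  using assms unfolding semitopology_def sinterior_def by (simp add: subset_iff)

lemma sinterior_subset: "sinterior Op R \<subseteq> R"
  unfolding sinterior_def by blast

lemma intertwined_set_subset_sclosure:
  assumes "U \<in> Op" and "p \<in> U"
  shows "intertwined_set P Op p \<subseteq> sclosure P Op U"
  using assms unfolding sclosure_def intertwined_set_def intertwined_def by blast

lemma sclosure_subset_intertwined_set:
  assumes "R \<subseteq> intertwined_set P Op p"
  shows "sclosure P Op R \<subseteq> intertwined_set P Op p"
  using assms unfolding sclosure_def intertwined_set_def intertwined_def by blast

lemma sclosure_community_eq_intertwined_set:
  assumes "semitopology P Op" and "weakly_regular P Op p"
  shows "sclosure P Op (community P Op p) = intertwined_set P Op p"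
proof
  show "sclosure P Op (community P Op p) \<subseteq> intertwined_set P Op p"
    unfolding community_def by (intro sclosure_subset_intertwined_set sinterior_subset)
  have "community P Op p \<in> Op"
    unfolding community_def using assms(1) by (rule sinterior_open)
  then show "intertwined_set P Op p \<subseteq> sclosure P Op (community P Op p)"
    using assms(2) unfolding weakly_regular_def by (rule intertwined_set_subset_sclosure)
qed

theorem theorem5p17:
  fixes P :: "'a set" and Op :: "'a set set" and p :: 'a
  assumes "semitopology P Op" and "p \<in> P"
  shows "(weakly_regular P Op p \<longrightarrow> sclosure P Op (community P Op p) = intertwined_set P Op p)
       \<and> (regular P Op p \<longrightarrow> sclosure P Op (community P Op p) = intertwined_set P Op p)"
  using sclosure_community_eq_intertwined_set[OF assms(1)]
  unfolding regular_def weakly_regular_def by blast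

end
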